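(* Let $n\ge 2$, let $\alpha_1,\dots,\alpha_n>0$ be ordinals, let $i\in[1,n]$ and let $\alpha_i'>\alpha_i$. Then $$\mathbf{w}(\omega^{\alpha_1}\times\dots\times\omega^{\alpha_i}\times\dots\times\omega^{\alpha_n})<\mathbf{w}(\omega^{\alpha_1}\times\dots\times\omega^{\alpha_i'}\times\dots\times\omega^{\alpha_n}).$$
   Context: Products have the componentwise order. The width $\mathbf{w}(A)$ of a wqo $A$ is the rank of the forest of nonempty finite sequences of pairwise incomparable elements of $A$ ordered by initial segment. *)

theory Defs
  imports Main
begin

text \<open>Ordinals are represented as well-orders (type 'a rel, predicate Well_order),
compared with the library relation ordLess (infix <o).\<close>

text \<open>The ordinal power omega^beta of a well-order beta: finitely supported functions
Field beta -> nat, ordered by comparing values at the beta-largest point of difference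
(standard Cantor normal form / ordinal exponentiation definition).\<close>

definition omega_exp_carrier :: "'a rel \<Rightarrow> ('a \<Rightarrow> nat) set" where
  "omega_exp_carrier \<beta> = {f. finite {x. f x \<noteq> 0} \<and> {x. f x \<noteq> 0} \<subseteq> Field \<beta>}"

definition omega_exp_le :: "'a rel \<Rightarrow> ('a \<Rightarrow> nat) \<Rightarrow> ('a \<Rightarrow> nat) \<Rightarrow> bool" where
  "omega_exp_le \<beta> f g \<longleftrightarrow>
     f = g \<or> (\<exists>x. f x < g x \<and> (\<forall>y. (x, y) \<in> \<beta> \<and> y \<noteq> x \<longrightarrow> f y = g y))"

text \<open>The product omega^(alpha 0) x ... x omega^(alpha (n-1)) with the componentwise order.
Tuples are functions on indices, padded with the zero function outside {0..<n}.\<close>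

definition prod_carrier :: "nat \<Rightarrow> (nat \<Rightarrow> 'a rel) \<Rightarrow> (nat \<Rightarrow> 'a \<Rightarrow> nat) set" where
  "prod_carrier n \<alpha> = {x. (\<forall>j<n. x j \<in> omega_exp_carrier (\<alpha> j)) \<and> (\<forall>j\<ge>n. x j = (\<lambda>_. 0))}"

definition prod_le :: "nat \<Rightarrow> (nat \<Rightarrow> 'a rel) \<Rightarrow> (nat \<Rightarrow> 'a \<Rightarrow> nat) \<Rightarrow> (nat \<Rightarrow> 'a \<Rightarrow> nat) \<Rightarrow> bool" where
  "prod_le n \<alpha> x y \<longleftrightarrow> (\<forall>j<n. omega_exp_le (\<alpha> j) (x j) (y j))"

definition incomp_seqs :: "'b set \<Rightarrow> ('b \<Rightarrow> 'b \<Rightarrow> bool) \<Rightarrow> 'b list set" where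
  "incomp_seqs A le = {s. s \<noteq> [] \<and> set s \<subseteq> A \<and>
      (\<forall>i<length s. \<forall>j<length s. i \<noteq> j \<longrightarrow> \<not> le (s ! i) (s ! j))}"

definition forest_rel :: "'b set \<Rightarrow> ('b \<Rightarrow> 'b \<Rightarrow> bool) \<Rightarrow> ('b list \<times> 'b list) set" where
  "forest_rel A le = {(t, s). s \<in> incomp_seqs A le \<and> t \<in> incomp_seqs A le \<and>
      (\<exists>u. u \<noteq> [] \<and> t = s @ u)}"

text \<open>rank_le N R W: the well-founded structure (N, R) has rank at most the ordinal W,
i.e. there is a map from N into W that is strictly decreasing along R
(from a node to its proper extensions).  The rank of the forest is the least such ordinal.\<close>

definition rank_le :: "'x set \<Rightarrow> ('x \<times> 'x) set \<Rightarrow> 'y rel \<Rightarrow> bool" where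
  "rank_le N R W \<longleftrightarrow> Well_order W \<and>
     (\<exists>f. (\<forall>x\<in>N. f x \<in> Field W) \<and>
          (\<forall>t s. (t, s) \<in> R \<longrightarrow> (f t, f s) \<in> W \<and> f t \<noteq> f s))"

definition width_le :: "'b set \<Rightarrow> ('b \<Rightarrow> 'b \<Rightarrow> bool) \<Rightarrow> 'y rel \<Rightarrow> bool" where
  "width_le A le W \<longleftrightarrow> rank_le (incomp_seqs A le) (forest_rel A le) W"

text \<open>w(A) < w(B): some ordinal bounds w(A) but not w(B).  The ordinal w(A) itself is
representable on (a subset of) the node type of the forest of A, so quantifying over
well-orders on 'b list suffices.\<close>

definition width_less :: "'b set \<Rightarrow> ('b \<Rightarrow> 'b \<Rightarrow> bool) \<Rightarrow> 'c set \<Rightarrow> ('c \<Rightarrow> 'c \<Rightarrow> bool) \<Rightarrow> bool" where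
  "width_less A le B le' \<longleftrightarrow> (\<exists>W :: 'b list rel. width_le A le W \<and> \<not> width_le B le' W)"

end

theory Submission
  imports Defs "HOL-Library.Ramsey" "HOL-Library.Multiset"
begin

text \<open>Each \<open>\<omega>^\<alpha>\<close> is a well-order, its strict order being contained in the
  Dershowitz--Manna multiset order. By Ramsey's theorem every sequence in a finite product of
  such orders has an infinite ascending subsequence, so the product is a wqo, its forest of
  antichain sequences is well-founded and has a least bounding well-order.

  For the strict increase pick a coordinate \<open>j \<noteq> i\<close> and a point \<open>m\<close> of \<open>\<alpha>\<^sub>j\<close>.
  Embed \<open>\<omega>^\<alpha>\<^sub>i\<close> into \<open>\<omega>^\<alpha>'\<^sub>i\<close> below \<open>\<omega>^p\<close>, where \<open>p\<close> is the least point of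
  \<open>\<alpha>'\<^sub>i\<close> outside the image of \<open>\<alpha>\<^sub>i\<close>, and add \<open>\<omega>^m\<close> in coordinate \<open>j\<close>. The resulting map
  between the products reflects the order, and the tuple \<open>x\<close> that is \<open>\<omega>^p\<close> in
  coordinate \<open>i\<close> and \<open>0\<close> elsewhere is incomparable with its whole image. Prepending \<open>x\<close> to
  the images of antichain sequences embeds the forest of the smaller product below the node
  \<open>[x]\<close> of the larger one, so every bound for the larger width restricts to a strictly
  smaller bound for the smaller width.\<close>

section \<open>The ordinal powers \<open>\<omega>^\<alpha>\<close>\<close>

lemma Well_order_finite_has_max:
  assumes "Well_order r" and "finite S" and "S \<noteq> {}" and "S \<subseteq> Field r"
  obtains m where "m \<in> S" and "\<forall>y\<in>S. (y, m) \<in> r"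
proof -
  have refl: "Refl r" and trans: "trans r"
    and total: "\<forall>a\<in>Field r. \<forall>b\<in>Field r. (a, b) \<in> r \<or> (b, a) \<in> r"
    using assms(1) by (simp_all add: wo_rel_def wo_rel.REFL wo_rel.TRANS wo_rel.TOTALS)
  have "\<exists>m\<in>S. \<forall>y\<in>S. (y, m) \<in> r"
    using assms(2-4)
  proof (induction S rule: finite_ne_induct)
    case (singleton x)
    then show ?case using refl by (auto simp: refl_on_def)
  next
    case (insert x F)
    then obtain m where m: "m \<in> F" "\<forall>y\<in>F. (y, m) \<in> r" by auto
    show ?case
    proof (cases "(x, m) \<in> r")
      case True
      with m show ?thesis by auto
    next
      case False
      with total insert m have "(m, x) \<in> r" by blast
      with m trans refl insert.prems have "\<forall>y\<in>insert x F. (y, x) \<in> r"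
        by (auto simp: refl_on_def dest: transD)
      then show ?thesis by blast
    qed
  qed
  with that show thesis by blast
qed

lemma omega_exp_le_refl [simp]: "omega_exp_le r f f"
  by (simp add: omega_exp_le_def)

lemma omega_exp_le_total:
  assumes wo: "Well_order r" and f: "f \<in> omega_exp_carrier r" and g: "g \<in> omega_exp_carrier r"
  shows "omega_exp_le r f g \<or> omega_exp_le r g f"
proof (cases "f = g")
  case False
  let ?D = "{x. f x \<noteq> g x}"
  have "?D \<subseteq> {x. f x \<noteq> 0} \<union> {x. g x \<noteq> 0}" by auto
  with f g have "finite ?D" and "?D \<subseteq> Field r"
    unfolding omega_exp_carrier_def by (auto intro: finite_subset)
  moreover have "?D \<noteq> {}" using False by auto
  ultimately obtain x where x: "x \<in> ?D" and max: "\<forall>y\<in>?D. (y, x) \<in> r"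
    using Well_order_finite_has_max[OF wo] by metis
  have "antisym r" using wo by (simp add: wo_rel_def wo_rel.ANTISYM)
  with max have "\<forall>y. (x, y) \<in> r \<and> y \<noteq> x \<longrightarrow> f y = g y"
    by (auto dest: antisymD)
  moreover from x have "f x < g x \<or> g x < f x" by auto
  ultimately show ?thesis
    unfolding omega_exp_le_def by (metis (no_types))
qed simp

lemma omega_exp_less_imp_mult:
  assumes wo: "Well_order r" and f: "f \<in> omega_exp_carrier r" and g: "g \<in> omega_exp_carrier r"
    and le: "omega_exp_le r f g" and ne: "f \<noteq> g"
  shows "(Abs_multiset f, Abs_multiset g) \<in> mult (r - Id)"
proof -
  obtain x where x: "f x < g x" and above: "\<forall>y. (x, y) \<in> r \<and> y \<noteq> x \<longrightarrow> f y = g y"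
    using le ne unfolding omega_exp_le_def by blast
  have fin: "finite {y. h y > 0}" if "\<And>y. h y \<le> f y + g y" for h :: "'a \<Rightarrow> nat"
  proof (rule finite_subset)
    show "{y. h y > 0} \<subseteq> {y. f y \<noteq> 0} \<union> {y. g y \<noteq> 0}"
    proof
      fix y assume "y \<in> {y. h y > 0}"
      with that[of y] show "y \<in> {y. f y \<noteq> 0} \<union> {y. g y \<noteq> 0}" by auto
    qed
    show "finite ({y. f y \<noteq> 0} \<union> {y. g y \<noteq> 0})"
      using f g unfolding omega_exp_carrier_def by blast
  qed
  define I J K where "I = Abs_multiset (\<lambda>y. min (f y) (g y))"
    and "J = Abs_multiset (\<lambda>y. g y - f y)" and "K = Abs_multiset (\<lambda>y. f y - g y)"
  have count: "count I = (\<lambda>y. min (f y) (g y))" "count J = (\<lambda>y. g y - f y)"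
    "count K = (\<lambda>y. f y - g y)" "count (Abs_multiset f) = f" "count (Abs_multiset g) = g"
    unfolding I_def J_def K_def by (rule count_Abs_multiset, rule fin, simp)+
  have "Abs_multiset f = I + K" and "Abs_multiset g = I + J"
    by (auto simp: multiset_eq_iff count)
  moreover have "x \<in># J" using x by (simp add: count_greater_zero_iff[symmetric] count)
  moreover have "(k, x) \<in> r - Id" if "k \<in># K" for k
  proof -
    have "g k < f k" using that by (simp add: count_greater_zero_iff[symmetric] count)
    then have "k \<noteq> x" and "k \<in> Field r" and "x \<in> Field r"
      using x f g unfolding omega_exp_carrier_def by auto
    with wo have "(k, x) \<in> r \<or> (x, k) \<in> r"
      by (simp add: wo_rel_def wo_rel.TOTALS)
    with above \<open>g k < f k\<close> \<open>k \<noteq> x\<close> show ?thesis by auto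
  qed
  ultimately show ?thesis
    using one_step_implies_mult[of J K "r - Id" I] by (metis empty_iff set_mset_empty)
qed

lemma wf_omega_exp_less:
  assumes "Well_order r"
  shows "wf {(f, g). f \<in> omega_exp_carrier r \<and> g \<in> omega_exp_carrier r \<and>
                    omega_exp_le r f g \<and> f \<noteq> g}"
proof (rule wf_subset)
  show "wf (inv_image (mult (r - Id)) Abs_multiset)"
    using assms by (simp add: wf_mult well_order_on_def)
  show "{(f, g). f \<in> omega_exp_carrier r \<and> g \<in> omega_exp_carrier r \<and>
                 omega_exp_le r f g \<and> f \<noteq> g} \<subseteq> inv_image (mult (r - Id)) Abs_multiset"
    using omega_exp_less_imp_mult[OF assms] by auto
qed

section \<open>Finite products of ordinal powers are well-quasi-orders\<close>

lemma infinite_ascending_subset_if_total_wf: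
  fixes a :: "nat \<Rightarrow> 'b" and Z :: "nat set"
  assumes total: "\<forall>x\<in>A. \<forall>y\<in>A. le x y \<or> le y x"
    and wf: "wf {(x, y). x \<in> A \<and> y \<in> A \<and> le x y \<and> \<not> le y x}"
    and a: "\<forall>k. a k \<in> A" and Z: "infinite Z"
  obtains Y where "Y \<subseteq> Z" and "infinite Y" and "\<forall>i\<in>Y. \<forall>j\<in>Y. i < j \<longrightarrow> le (a i) (a j)"
proof -
  define colour where "colour S = (if le (a (Min S)) (a (Max S)) then 0 else 1 :: nat)" for S
  have two_colours: "\<forall>i\<in>Z. \<forall>j\<in>Z. i \<noteq> j \<longrightarrow> colour {i, j} < 2"
    by (simp add: colour_def)
  obtain Y t where Y: "Y \<subseteq> Z" "infinite Y"
    and homogeneous: "\<forall>i\<in>Y. \<forall>j\<in>Y. i \<noteq> j \<longrightarrow> colour {i, j} = t"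
    using Ramsey2[OF Z two_colours] by (elim exE conjE) blast
  have colour_pair: "colour {i, j} = (if le (a i) (a j) then 0 else 1)" if "i < j" for i j
    using that unfolding colour_def by (simp add: min_def max_def)
  show thesis
  proof (cases "t = 0")
    case True
    have "\<forall>i\<in>Y. \<forall>j\<in>Y. i < j \<longrightarrow> le (a i) (a j)"
    proof (intro ballI impI)
      fix i j assume "i \<in> Y" "j \<in> Y" "i < j"
      with homogeneous True have "colour {i, j} = 0" by (simp add: less_imp_neq)
      with colour_pair[OF \<open>i < j\<close>] show "le (a i) (a j)" by (simp split: if_splits)
    qed
    with Y show thesis by (rule that)
  next
    case False
    define F where "F k = a (enumerate Y k)" for k
    have "\<not> le (F k) (F (Suc k))" for k
    proof -
      have lt: "enumerate Y k < enumerate Y (Suc k)"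
        using strict_mono_enumerate[OF Y(2)] by (simp add: strict_mono_def)
      have "colour {enumerate Y k, enumerate Y (Suc k)} = t"
        using homogeneous enumerate_in_set[OF Y(2)] less_imp_neq[OF lt] by blast
      with False colour_pair[OF lt] show ?thesis unfolding F_def by (simp split: if_splits)
    qed
    with total a have "(F (Suc k), F k) \<in> {(x, y). x \<in> A \<and> y \<in> A \<and> le x y \<and> \<not> le y x}" for k
      unfolding F_def by blast
    with wf show thesis
      unfolding wf_iff_no_infinite_down_chain by (elim notE) (rule exI[of _ F], blast)
  qed
qed

lemma omega_exp_infinite_ascending_subset:
  fixes a :: "nat \<Rightarrow> 'a \<Rightarrow> nat" and Z :: "nat set"
  assumes wo: "Well_order r" and a: "\<forall>k. a k \<in> omega_exp_carrier r" and Z: "infinite Z"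
  obtains Y where "Y \<subseteq> Z" and "infinite Y"
    and "\<forall>i\<in>Y. \<forall>j\<in>Y. i < j \<longrightarrow> omega_exp_le r (a i) (a j)"
proof (rule infinite_ascending_subset_if_total_wf[where a=a and Z=Z])
  show "\<forall>k. a k \<in> omega_exp_carrier r" "infinite Z" by (fact a, fact Z)
  show "\<forall>f\<in>omega_exp_carrier r. \<forall>g\<in>omega_exp_carrier r. omega_exp_le r f g \<or> omega_exp_le r g f"
    using omega_exp_le_total[OF wo] by blast
  show "wf {(f, g). f \<in> omega_exp_carrier r \<and> g \<in> omega_exp_carrier r \<and>
                    omega_exp_le r f g \<and> \<not> omega_exp_le r g f}"
    by (rule wf_subset[OF wf_omega_exp_less[OF wo]]) auto
qed (rule that)

lemma prod_infinite_ascending_subset: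
  assumes wo: "\<forall>c<n. Well_order (\<alpha> c)" and a: "\<forall>k. a k \<in> prod_carrier n \<alpha>"
  obtains Y :: "nat set" where "infinite Y"
    and "\<forall>i\<in>Y. \<forall>j\<in>Y. i < j \<longrightarrow> prod_le n \<alpha> (a i) (a j)"
proof -
  have "\<exists>Y. infinite Y \<and> (\<forall>i\<in>Y. \<forall>j\<in>Y. i < j \<longrightarrow> (\<forall>c<d. omega_exp_le (\<alpha> c) (a i c) (a j c)))"
    if "d \<le> n" for d
    using that
  proof (induction d)
    case 0
    show ?case using infinite_UNIV_nat by (intro exI[of _ UNIV]) simp
  next
    case (Suc d)
    obtain Y where Y: "infinite Y"
      and asc: "\<forall>i\<in>Y. \<forall>j\<in>Y. i < j \<longrightarrow> (\<forall>c<d. omega_exp_le (\<alpha> c) (a i c) (a j c))"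
      using Suc by (auto dest: Suc_leD)
    have wo_d: "Well_order (\<alpha> d)" and a_d: "\<forall>k. a k d \<in> omega_exp_carrier (\<alpha> d)"
      using wo a Suc.prems unfolding prod_carrier_def by simp_all
    obtain Y' where Y': "Y' \<subseteq> Y" "infinite Y'"
      and asc_d: "\<forall>i\<in>Y'. \<forall>j\<in>Y'. i < j \<longrightarrow> omega_exp_le (\<alpha> d) (a i d) (a j d)"
      by (rule omega_exp_infinite_ascending_subset[OF wo_d a_d Y])
    show ?case
    proof (intro exI[of _ Y'] conjI ballI impI allI)
      fix i j c assume ij: "i \<in> Y'" "j \<in> Y'" "i < j" and "c < Suc d"
      then consider "c < d" | "c = d" by linarith
      then show "omega_exp_le (\<alpha> c) (a i c) (a j c)"
        using asc asc_d Y'(1) ij by cases blast+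
    qed (fact Y'(2))
  qed
  from this[of n] obtain Y where "infinite Y"
    and "\<forall>i\<in>Y. \<forall>j\<in>Y. i < j \<longrightarrow> prod_le n \<alpha> (a i) (a j)"
    unfolding prod_le_def by blast
  then show thesis by (rule that)
qed

definition almost_full_on :: "('b \<Rightarrow> 'b \<Rightarrow> bool) \<Rightarrow> 'b set \<Rightarrow> bool" where
  "almost_full_on le A \<longleftrightarrow> (\<forall>a :: nat \<Rightarrow> 'b. (\<forall>k. a k \<in> A) \<longrightarrow> (\<exists>i j. i < j \<and> le (a i) (a j)))"

lemma almost_full_on_prod:
  assumes "\<forall>c<n. Well_order (\<alpha> c)"
  shows "almost_full_on (prod_le n \<alpha>) (prod_carrier n \<alpha>)"
  unfolding almost_full_on_def
proof (intro allI impI)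
  fix a :: "nat \<Rightarrow> nat \<Rightarrow> 'a \<Rightarrow> nat" assume "\<forall>k. a k \<in> prod_carrier n \<alpha>"
  then obtain Y where Y: "infinite Y" and asc: "\<forall>i\<in>Y. \<forall>j\<in>Y. i < j \<longrightarrow> prod_le n \<alpha> (a i) (a j)"
    using prod_infinite_ascending_subset[OF assms] by blast
  obtain i where "i \<in> Y" using Y unfolding infinite_nat_iff_unbounded by blast
  moreover obtain j where "j \<in> Y" "i < j" using Y unfolding infinite_nat_iff_unbounded by blast
  ultimately show "\<exists>i j. i < j \<and> prod_le n \<alpha> (a i) (a j)" using asc by blast
qed

lemma wf_forest_rel:
  assumes "almost_full_on le A"
  shows "wf (forest_rel A le)"
  unfolding wf_iff_no_infinite_down_chain
proof
  assume "\<exists>s. \<forall>k. (s (Suc k), s k) \<in> forest_rel A le"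
  then obtain s where s: "\<And>k. (s (Suc k), s k) \<in> forest_rel A le" by blast
  then have incomp: "s k \<in> incomp_seqs A le" for k
    unfolding forest_rel_def by blast
  have extends: "\<exists>v. s l = s k @ v" if "k \<le> l" for k l
    using that
  proof (induction l rule: dec_induct)
    case (step l)
    with s[of l] show ?case unfolding forest_rel_def by auto
  qed simp
  have long: "k < length (s k)" for k
  proof (induction k)
    case 0
    show ?case using incomp[of 0] unfolding incomp_seqs_def by simp
  next
    case (Suc k)
    with s[of k] show ?case unfolding forest_rel_def by (auto simp flip: length_greater_0_conv)
  qed
  define a where "a k = s k ! k" for k
  have "a k \<in> A" for k
    using incomp[of k] long[of k] unfolding a_def incomp_seqs_def by auto
  then obtain i j where "i < j" and le: "le (a i) (a j)"
    using assms unfolding almost_full_on_def by (elim allE[of _ a]) blast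
  obtain v where "s j = s i @ v" using extends[of i j] \<open>i < j\<close> by auto
  then have "a i = s j ! i" using long[of i] unfolding a_def by (simp add: nth_append)
  moreover have "\<not> le (s j ! i) (s j ! j)"
    using incomp[of j] long[of j] \<open>i < j\<close> unfolding incomp_seqs_def by simp
  ultimately show False using le unfolding a_def by simp
qed

section \<open>Existence of the width\<close>

lemma Well_order_Union_chain:
  assumes chain: "R \<in> Chains init_seg_of" and wo: "\<forall>r\<in>R. Well_order r"
  shows "Well_order (\<Union>R)"
proof -
  have sub: "chain\<^sub>\<subseteq> R"
    using chain by (auto simp: init_seg_of_def chain_subset_def Chains_def)
  from wo have "\<forall>r\<in>R. Refl r" "\<forall>r\<in>R. trans r" "\<forall>r\<in>R. antisym r" "\<forall>r\<in>R. Total r"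
    "\<forall>r\<in>R. wf (r - Id)"
    by (simp_all add: order_on_defs)
  note props = this
  have "\<Union>R \<subseteq> Field (\<Union>R) \<times> Field (\<Union>R)" using Restr_Field by blast
  moreover have "Refl (\<Union>R)" using props(1) unfolding refl_on_def by fastforce
  moreover have "trans (\<Union>R)" by (rule chain_subset_trans_Union[OF sub props(2)])
  moreover have "antisym (\<Union>R)" by (rule chain_subset_antisym_Union[OF sub props(3)])
  moreover have "Total (\<Union>R)" by (rule chain_subset_Total_Union[OF sub props(4)])
  moreover have "wf (\<Union>R - Id)"
  proof -
    have "\<Union>R - Id = \<Union>{r - Id | r. r \<in> R}" by blast
    with props(5) wf_Union_wf_init_segs[OF Chains_inits_DiffI[OF chain]] show ?thesis
      by fastforce
  qed
  ultimately show ?thesis by (simp add: order_on_defs)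
qed

lemma Well_order_insert_top:
  assumes wo: "Well_order m" and x: "x \<notin> Field m"
  shows "Well_order (m \<union> insert x (Field m) \<times> {x})"
    (is "Well_order ?m")
proof -
  have "Refl m" "trans m" "antisym m" "Total m" "wf (m - Id)"
    using wo by (simp_all add: order_on_defs)
  note props = this
  have Fm: "Field ?m = insert x (Field m)" by (auto simp: Field_def)
  have "?m \<subseteq> Field ?m \<times> Field ?m" using Restr_Field by blast
  moreover have "Refl ?m" using props(1) Fm unfolding refl_on_def by auto
  moreover have "trans ?m" using props(2) x unfolding trans_def Field_def by blast
  moreover have "antisym ?m" using props(3) x unfolding antisym_def Field_def by blast
  moreover have "Total ?m" using props(4) Fm unfolding total_on_def by auto
  moreover have "wf (?m - Id)"
  proof -
    have "?m - Id = (m - Id) \<union> Field m \<times> {x}" using x by (auto simp: Field_def)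
    moreover have "wf (Field m \<times> {x})"
      using x by (intro wf_subset[OF wf_measure[of "\<lambda>z. if z = x then 1 else 0"]]) auto
    moreover have "Domain (m - Id) \<inter> Range (Field m \<times> {x}) = {}" using x by (auto simp: Field_def)
    ultimately show ?thesis using wf_Un[OF props(5)] by metis
  qed
  ultimately show ?thesis by (simp add: order_on_defs)
qed

text \<open>Zorn's lemma gives a maximal well-order that contains \<open>p\<close> on its field and whose
  field is closed under \<open>p\<close>-predecessors; a \<open>p\<close>-minimal point outside the field could be
  added on top, so the field is everything.\<close>

lemma wf_imp_Well_order_extension:
  assumes "wf p"
  obtains w where "p \<subseteq> w" and "Well_order w" and "Field w = UNIV"
proof -
  define K where "K = {r. Well_order r \<and> (\<forall>a b. (a, b) \<in> p \<longrightarrow> b \<in> Field r \<longrightarrow> (a, b) \<in> r)}"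
  define I where "I = init_seg_of \<inter> K \<times> K"
  have FI: "Field I = K" unfolding I_def Field_def by (auto simp: init_seg_of_def)
  have po: "Partial_order I"
    unfolding partial_order_on_def preorder_on_def FI
    by (auto simp: refl_on_def trans_def antisym_def I_def antisym_init_seg_of
        intro: trans_init_seg_of)
  have chain_bounded: "\<exists>u\<in>Field I. \<forall>r\<in>R. (r, u) \<in> I" if "R \<in> Chains I" for R
  proof -
    have RK: "R \<subseteq> K" and chain: "R \<in> Chains init_seg_of"
      using that unfolding Chains_def I_def by blast+
    have "Well_order (\<Union>R)"
      using RK Well_order_Union_chain[OF chain] unfolding K_def by blast
    moreover have "(a, b) \<in> \<Union>R" if "(a, b) \<in> p" "b \<in> Field (\<Union>R)" for a b
    proof -
      obtain r where "r \<in> R" "b \<in> Field r" using \<open>b \<in> Field (\<Union>R)\<close> by (auto simp: Field_def)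
      with RK \<open>(a, b) \<in> p\<close> show ?thesis unfolding K_def by blast
    qed
    ultimately have UK: "\<Union>R \<in> K" unfolding K_def by blast
    show ?thesis
    proof (intro bexI ballI)
      fix r assume "r \<in> R"
      with RK UK Chains_init_seg_of_Union[OF chain] show "(r, \<Union>R) \<in> I"
        unfolding I_def by blast
    qed (simp add: FI UK)
  qed
  obtain m where "m \<in> K" and max: "\<forall>r\<in>K. (m, r) \<in> I \<longrightarrow> r = m"
    using Zorns_po_lemma[OF po chain_bounded] unfolding FI by blast
  then have wo: "Well_order m" and closed: "\<forall>a b. (a, b) \<in> p \<longrightarrow> b \<in> Field m \<longrightarrow> (a, b) \<in> m"
    unfolding K_def by blast+
  have "Field m = UNIV"
  proof (rule ccontr)
    assume "Field m \<noteq> UNIV"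
    then obtain x0 where "x0 \<in> - Field m" by auto
    then obtain x where x: "x \<notin> Field m" and min: "\<forall>y. (y, x) \<in> p \<longrightarrow> y \<in> Field m"
      using wf_eq_minimal[THEN iffD1, OF \<open>wf p\<close>, rule_format, of x0 "- Field m"] by blast
    define m' where "m' = m \<union> insert x (Field m) \<times> {x}"
    have Fm': "Field m' = insert x (Field m)" unfolding m'_def by (auto simp: Field_def)
    have "(a, b) \<in> m'" if "(a, b) \<in> p" and "b \<in> Field m'" for a b
    proof (cases "b = x")
      case True
      with min that(1) show ?thesis unfolding m'_def by blast
    next
      case False
      with closed that Fm' show ?thesis unfolding m'_def by blast
    qed
    then have "m' \<in> K" using Well_order_insert_top[OF wo x] unfolding K_def m'_def by blast
    moreover have "m initial_segment_of m'"
      using x unfolding init_seg_of_def m'_def by (auto simp: Field_def)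
    ultimately have "m' = m" using max \<open>m \<in> K\<close> unfolding I_def by blast
    with x Fm' show False by blast
  qed
  with closed have "p \<subseteq> m" by auto
  with wo \<open>Field m = UNIV\<close> show thesis using that by blast
qed

lemma exists_minimal_width_bound:
  fixes A :: "'b set"
  assumes "wf (forest_rel A le)"
  obtains W :: "'b list rel"
  where "width_le A le W" and "\<forall>W' :: 'b list rel. (W', W) \<in> ordLess \<longrightarrow> \<not> width_le A le W'"
proof -
  obtain w :: "'b list rel" where "forest_rel A le \<subseteq> w" "Well_order w" "Field w = UNIV"
    by (rule wf_imp_Well_order_extension[OF assms])
  then have "width_le A le w"
    unfolding width_le_def rank_le_def by (intro conjI exI[of _ id]) (auto simp: forest_rel_def)
  then have "w \<in> {W. width_le A le W}" by simp
  from wf_eq_minimal[THEN iffD1, OF wf_ordLess, rule_format, OF this]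
  obtain W :: "'b list rel" where "W \<in> {W. width_le A le W}"
    and "\<forall>W' :: 'b list rel. (W', W) \<in> ordLess \<longrightarrow> W' \<notin> {W. width_le A le W}"
    by blast
  with that show thesis by blast
qed

lemma Cons_map_in_incomp_seqs:
  assumes s: "s \<in> incomp_seqs A le" and e: "e ` A \<subseteq> B" and x: "x \<in> B"
    and reflect: "\<forall>a\<in>A. \<forall>b\<in>A. le' (e a) (e b) \<longrightarrow> le a b"
    and incomparable: "\<forall>a\<in>A. \<not> le' (e a) x \<and> \<not> le' x (e a)"
  shows "x # map e s \<in> incomp_seqs B le'"
proof -
  have sA: "set s \<subseteq> A" and antichain: "\<forall>i<length s. \<forall>j<length s. i \<noteq> j \<longrightarrow> \<not> le (s ! i) (s ! j)"
    using s unfolding incomp_seqs_def by blast+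
  have "\<not> le' ((x # map e s) ! i) ((x # map e s) ! j)"
    if "i < Suc (length s)" "j < Suc (length s)" "i \<noteq> j" for i j
  proof (cases i; cases j)
    fix i' j' assume "i = Suc i'" "j = Suc j'"
    with that sA antichain reflect show ?thesis by (simp add: subset_iff) (metis nth_mem)
  qed (use that sA incomparable in \<open>auto dest: nth_mem\<close>)
  with sA e x show ?thesis unfolding incomp_seqs_def by auto
qed

text \<open>A bound \<open>W\<close> for the target width, restricted below the rank of the node \<open>[x]\<close>,
  bounds the source width via \<open>s \<mapsto> x # map e s\<close>; so the least bound for the source
  cannot bound the target.\<close>

lemma width_less_if_reflecting_map:
  fixes A :: "'b set" and B :: "'c set"
  assumes wf: "wf (forest_rel A le)"
    and e: "e ` A \<subseteq> B" and x: "x \<in> B"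
    and reflect: "\<forall>a\<in>A. \<forall>b\<in>A. le' (e a) (e b) \<longrightarrow> le a b"
    and incomparable: "\<forall>a\<in>A. \<not> le' (e a) x \<and> \<not> le' x (e a)"
  shows "width_less A le B le'"
proof -
  obtain W :: "'b list rel" where W: "width_le A le W"
    and W_min: "\<forall>W' :: 'b list rel. (W', W) \<in> ordLess \<longrightarrow> \<not> width_le A le W'"
    by (rule exists_minimal_width_bound[OF wf])
  have "\<not> width_le B le' W"
  proof
    assume "width_le B le' W"
    then obtain f where wo: "Well_order W" and f: "\<forall>t\<in>incomp_seqs B le'. f t \<in> Field W"
      and f_desc: "\<forall>t s. (t, s) \<in> forest_rel B le' \<longrightarrow> (f t, f s) \<in> W \<and> f t \<noteq> f s"
      unfolding width_le_def rank_le_def by blast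
    define graft where "graft s = x # map e s" for s
    have graft: "graft s \<in> incomp_seqs B le'" if "s \<in> incomp_seqs A le" for s
      unfolding graft_def using Cons_map_in_incomp_seqs[OF that e x reflect incomparable] .
    have root: "[x] \<in> incomp_seqs B le'" using x unfolding incomp_seqs_def by auto
    have graft_forest: "(graft t, graft s) \<in> forest_rel B le'"
      if "(t, s) \<in> forest_rel A le" for t s
      using that graft unfolding forest_rel_def graft_def by auto
    have graft_root: "(graft s, [x]) \<in> forest_rel B le'" if "s \<in> incomp_seqs A le" for s
      using that graft root unfolding forest_rel_def graft_def incomp_seqs_def by auto
    define W' where "W' = Restr W (underS W (f [x]))"
    have "(W', W) \<in> ordLess"
      unfolding W'_def using underS_Restr_ordLess[OF wo] f root by blast
    moreover have "width_le A le W'"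
      unfolding width_le_def rank_le_def
    proof (intro conjI exI[of _ "f \<circ> graft"] ballI allI impI)
      show "Well_order W'" unfolding W'_def by (rule Well_order_Restr[OF wo])
    next
      fix s assume "s \<in> incomp_seqs A le"
      then have below: "f (graft s) \<in> underS W (f [x])"
        using graft_root f_desc unfolding underS_def by blast
      have "Refl W" using wo by (simp add: wo_rel_def wo_rel.REFL)
      then have "(f (graft s), f (graft s)) \<in> W"
        by (rule refl_onD[OF _ underS_Field[OF below]])
      with below show "(f \<circ> graft) s \<in> Field W'"
        unfolding W'_def by (auto intro: FieldI1)
    next
      fix t s assume "(t, s) \<in> forest_rel A le"
      then show "((f \<circ> graft) t, (f \<circ> graft) s) \<in> W'" and "(f \<circ> graft) t \<noteq> (f \<circ> graft) s"
        using graft_forest graft_root f_desc unfolding W'_def forest_rel_def underS_def by auto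
    qed
    ultimately show False using W_min by blast
  qed
  with W show ?thesis unfolding width_less_def by blast
qed

section \<open>Enlarging one factor of the product\<close>

definition pushforward :: "('a \<Rightarrow> 'b) \<Rightarrow> 'a set \<Rightarrow> ('a \<Rightarrow> nat) \<Rightarrow> 'b \<Rightarrow> nat" where
  "pushforward h F f q = (if q \<in> h ` F then f (inv_into F h q) else 0)"

lemma pushforward_apply: "inj_on h F \<Longrightarrow> y \<in> F \<Longrightarrow> pushforward h F f (h y) = f y"
  by (simp add: pushforward_def)

lemma pushforward_eq_zero: "q \<notin> h ` F \<Longrightarrow> pushforward h F f q = 0"
  by (simp add: pushforward_def)

lemma pushforward_in_omega_exp_carrier:
  assumes inj: "inj_on h (Field r)" and into: "h ` Field r \<subseteq> Field r'"
    and f: "f \<in> omega_exp_carrier r"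
  shows "pushforward h (Field r) f \<in> omega_exp_carrier r'"
proof -
  have "{q. pushforward h (Field r) f q \<noteq> 0} \<subseteq> h ` {y. f y \<noteq> 0}"
    using inj by (auto simp: pushforward_def)
  moreover have "h ` {y. f y \<noteq> 0} \<subseteq> Field r'" using f into unfolding omega_exp_carrier_def by auto
  ultimately show ?thesis
    using f unfolding omega_exp_carrier_def by (auto intro: finite_subset)
qed

lemma pushforward_reflects_omega_exp_le:
  assumes inj: "inj_on h (Field r)" and mono: "\<forall>a b. (a, b) \<in> r \<longrightarrow> (h a, h b) \<in> r'"
    and f: "f \<in> omega_exp_carrier r" and g: "g \<in> omega_exp_carrier r"
    and le: "omega_exp_le r' (pushforward h (Field r) f) (pushforward h (Field r) g)"
  shows "omega_exp_le r f g"
proof (cases "pushforward h (Field r) f = pushforward h (Field r) g")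
  case True
  have "f y = g y" for y
  proof (cases "y \<in> Field r")
    case True
    then show ?thesis
      using \<open>pushforward h (Field r) f = pushforward h (Field r) g\<close> pushforward_apply[OF inj]
      by metis
  next
    case False
    with f g have "f y = 0" "g y = 0" unfolding omega_exp_carrier_def by blast+
    then show ?thesis by simp
  qed
  then have "f = g" by (simp add: fun_eq_iff)
  then show ?thesis by simp
next
  case False
  then obtain q where q: "pushforward h (Field r) f q < pushforward h (Field r) g q"
    and above: "\<forall>q'. (q, q') \<in> r' \<and> q' \<noteq> q \<longrightarrow>
                   pushforward h (Field r) f q' = pushforward h (Field r) g q'"
    using le unfolding omega_exp_le_def by blast
  then obtain x where x: "x \<in> Field r" "q = h x"
    using pushforward_eq_zero by (metis image_iff less_nat_zero_code)
  have "f x < g x" using q x pushforward_apply[OF inj x(1)] by metis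
  moreover have "f y = g y" if "(x, y) \<in> r" "y \<noteq> x" for y
  proof -
    have y: "y \<in> Field r" using that by (auto simp: Field_def)
    with that inj x mono have "(q, h y) \<in> r'" "h y \<noteq> q" by (auto dest: inj_onD)
    with above pushforward_apply[OF inj y] show ?thesis by metis
  qed
  ultimately show ?thesis unfolding omega_exp_le_def by blast
qed

text \<open>\<open>E\<close> pushes exponents forward along the embedding of \<open>\<alpha>\<close> onto an initial segment
  \<open>underS \<beta> p\<close>; \<open>top\<close> is \<open>\<omega>^p\<close>.\<close>

lemma omega_exp_embedding_below_point:
  assumes wo: "Well_order \<alpha>" and less: "(\<alpha>, \<beta>) \<in> ordLess"
  obtains E top where
    "\<forall>f\<in>omega_exp_carrier \<alpha>. E f \<in> omega_exp_carrier \<beta>"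
    "\<forall>f\<in>omega_exp_carrier \<alpha>. \<forall>g\<in>omega_exp_carrier \<alpha>.
       omega_exp_le \<beta> (E f) (E g) \<longrightarrow> omega_exp_le \<alpha> f g"
    "top \<in> omega_exp_carrier \<beta>"
    "\<forall>f\<in>omega_exp_carrier \<alpha>. \<not> omega_exp_le \<beta> top (E f)"
proof -
  obtain h where wo\<beta>: "Well_order \<beta>" and emb: "embedS \<alpha> \<beta> h"
    using less unfolding ordLess_def by blast
  then have embed: "embed \<alpha> \<beta> h" unfolding embedS_def by blast
  have inj: "inj_on h (Field \<alpha>)" by (rule embed_inj_on[OF wo embed])
  have mono: "\<forall>a b. (a, b) \<in> \<alpha> \<longrightarrow> (h a, h b) \<in> \<beta>"
    using embed_compat[OF embed] unfolding compat_def by blast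
  have strict: "h ` Field \<alpha> < Field \<beta>" by (rule embedS_Field[OF wo emb])
  have "wo_rel.ofilter \<beta> (h ` Field \<alpha>)" by (rule embed_Field_ofilter[OF wo wo\<beta> embed])
  with wo\<beta> strict obtain p where p: "p \<in> Field \<beta>" and image: "h ` Field \<alpha> = underS \<beta> p"
    using wo_rel.ofilter_underS_Field[of \<beta> "h ` Field \<alpha>"] unfolding wo_rel_def by auto
  define top where "top q = (if q = p then 1 else 0 :: nat)" for q
  have "top \<in> omega_exp_carrier \<beta>"
    using p unfolding omega_exp_carrier_def top_def by simp
  moreover have "\<not> omega_exp_le \<beta> top (pushforward h (Field \<alpha>) f)" for f
  proof
    assume le: "omega_exp_le \<beta> top (pushforward h (Field \<alpha>) f)"
    have p_out: "pushforward h (Field \<alpha>) f p = 0"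
      using image by (intro pushforward_eq_zero) (simp add: underS_def)
    then have "top \<noteq> pushforward h (Field \<alpha>) f" by (auto simp: top_def fun_eq_iff)
    then obtain q where q: "top q < pushforward h (Field \<alpha>) f q"
      and above: "\<forall>q'. (q, q') \<in> \<beta> \<and> q' \<noteq> q \<longrightarrow> top q' = pushforward h (Field \<alpha>) f q'"
      using le unfolding omega_exp_le_def by blast
    have "q \<in> h ` Field \<alpha>"
    proof (rule ccontr)
      assume "q \<notin> h ` Field \<alpha>"
      with q show False by (simp add: pushforward_eq_zero)
    qed
    with image have "(q, p) \<in> \<beta>" and "p \<noteq> q" by (auto simp: underS_def)
    with above p_out show False by (auto simp: top_def)
  qed
  moreover have "pushforward h (Field \<alpha>) f \<in> omega_exp_carrier \<beta>"
    if "f \<in> omega_exp_carrier \<alpha>" for f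
    using pushforward_in_omega_exp_carrier[OF inj _ that] strict by blast
  ultimately show thesis
    using that[of "pushforward h (Field \<alpha>)" top] pushforward_reflects_omega_exp_le[OF inj mono]
    by blast
qed

lemma omega_exp_le_bump_iff:
  "omega_exp_le r (f(m := Suc (f m))) (g(m := Suc (g m))) \<longleftrightarrow> omega_exp_le r f g"
proof -
  have "(f(m := Suc (f m))) y = (g(m := Suc (g m))) y \<longleftrightarrow> f y = g y"
    and "(f(m := Suc (f m))) y < (g(m := Suc (g m))) y \<longleftrightarrow> f y < g y" for y
    by simp_all
  then show ?thesis by (simp only: omega_exp_le_def fun_eq_iff)
qed

lemma not_omega_exp_le_bump_zero: "\<not> omega_exp_le r (f(m := Suc (f m))) (\<lambda>_. 0)"
proof -
  have "f(m := Suc (f m)) \<noteq> (\<lambda>_. 0)"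
  proof
    assume "f(m := Suc (f m)) = (\<lambda>_. 0)"
    then have "(f(m := Suc (f m))) m = 0" by simp
    then show False by simp
  qed
  then show ?thesis by (simp add: omega_exp_le_def)
qed

lemma omega_exp_carrier_bump:
  assumes "f \<in> omega_exp_carrier r" and "m \<in> Field r"
  shows "f(m := Suc (f m)) \<in> omega_exp_carrier r"
proof -
  have "{y. (f(m := Suc (f m))) y \<noteq> 0} \<subseteq> insert m {y. f y \<noteq> 0}" by auto
  with assms show ?thesis unfolding omega_exp_carrier_def by (auto intro: finite_subset)
qed

lemma width_less_prod_if_componentwise_maps:
  fixes e :: "nat \<Rightarrow> ('a \<Rightarrow> nat) \<Rightarrow> 'a \<Rightarrow> nat"
  assumes wo: "\<forall>c<n. Well_order (\<alpha> c)"
    and into: "\<forall>c<n. \<forall>f\<in>omega_exp_carrier (\<alpha> c). e c f \<in> omega_exp_carrier (\<alpha>' c)"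
    and reflect: "\<forall>c<n. \<forall>f\<in>omega_exp_carrier (\<alpha> c). \<forall>g\<in>omega_exp_carrier (\<alpha> c).
                    omega_exp_le (\<alpha>' c) (e c f) (e c g) \<longrightarrow> omega_exp_le (\<alpha> c) f g"
    and x: "x \<in> prod_carrier n \<alpha>'"
    and i: "i < n" "\<forall>f\<in>omega_exp_carrier (\<alpha> i). \<not> omega_exp_le (\<alpha>' i) (x i) (e i f)"
    and j: "j < n" "\<forall>f\<in>omega_exp_carrier (\<alpha> j). \<not> omega_exp_le (\<alpha>' j) (e j f) (x j)"
  shows "width_less (prod_carrier n \<alpha>) (prod_le n \<alpha>) (prod_carrier n \<alpha>') (prod_le n \<alpha>')"
proof (rule width_less_if_reflecting_map[where e = "\<lambda>a c. if c < n then e c (a c) else (\<lambda>_. 0)"])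
  show "wf (forest_rel (prod_carrier n \<alpha>) (prod_le n \<alpha>))"
    by (rule wf_forest_rel[OF almost_full_on_prod[OF wo]])
  show "(\<lambda>a c. if c < n then e c (a c) else (\<lambda>_. 0)) ` prod_carrier n \<alpha> \<subseteq> prod_carrier n \<alpha>'"
    using into unfolding prod_carrier_def by auto
  show "x \<in> prod_carrier n \<alpha>'" by (rule x)
  show "\<forall>a\<in>prod_carrier n \<alpha>. \<forall>b\<in>prod_carrier n \<alpha>.
          prod_le n \<alpha>' (\<lambda>c. if c < n then e c (a c) else (\<lambda>_. 0))
                       (\<lambda>c. if c < n then e c (b c) else (\<lambda>_. 0)) \<longrightarrow> prod_le n \<alpha> a b"
    using reflect unfolding prod_carrier_def prod_le_def by auto
  show "\<forall>a\<in>prod_carrier n \<alpha>.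
          \<not> prod_le n \<alpha>' (\<lambda>c. if c < n then e c (a c) else (\<lambda>_. 0)) x \<and>
          \<not> prod_le n \<alpha>' x (\<lambda>c. if c < n then e c (a c) else (\<lambda>_. 0))"
    using i j unfolding prod_carrier_def prod_le_def by auto
qed

lemma width_less_prod_fun_upd:
  assumes wo: "\<forall>c<n. Well_order (\<alpha> c)" and i: "i < n"
    and j: "j < n" "j \<noteq> i" and m: "m \<in> Field (\<alpha> j)"
    and less: "(\<alpha> i, \<beta>) \<in> ordLess"
  shows "width_less (prod_carrier n \<alpha>) (prod_le n \<alpha>)
                    (prod_carrier n (\<alpha>(i := \<beta>))) (prod_le n (\<alpha>(i := \<beta>)))"
proof -
  have "Well_order (\<alpha> i)" using wo i by blast
  then obtain E top where E: "\<forall>f\<in>omega_exp_carrier (\<alpha> i). E f \<in> omega_exp_carrier \<beta>"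
    and E_reflect: "\<forall>f\<in>omega_exp_carrier (\<alpha> i). \<forall>g\<in>omega_exp_carrier (\<alpha> i).
                      omega_exp_le \<beta> (E f) (E g) \<longrightarrow> omega_exp_le (\<alpha> i) f g"
    and top: "top \<in> omega_exp_carrier \<beta>" "\<forall>f\<in>omega_exp_carrier (\<alpha> i). \<not> omega_exp_le \<beta> top (E f)"
    by (rule omega_exp_embedding_below_point[OF _ less])
  define e where "e c = (if c = i then E else if c = j then (\<lambda>f. f(m := Suc (f m))) else id)" for c
  define x where "x c = (if c = i then top else (\<lambda>_. 0 :: nat))" for c
  show ?thesis
  proof (rule width_less_prod_if_componentwise_maps[OF wo _ _ _ i _ j(1)])
    show "\<forall>c<n. \<forall>f\<in>omega_exp_carrier (\<alpha> c). e c f \<in> omega_exp_carrier ((\<alpha>(i := \<beta>)) c)"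
      using E omega_exp_carrier_bump m j(2) unfolding e_def by auto
    show "\<forall>c<n. \<forall>f\<in>omega_exp_carrier (\<alpha> c). \<forall>g\<in>omega_exp_carrier (\<alpha> c).
            omega_exp_le ((\<alpha>(i := \<beta>)) c) (e c f) (e c g) \<longrightarrow> omega_exp_le (\<alpha> c) f g"
      using E_reflect j(2) unfolding e_def by (auto simp: omega_exp_le_bump_iff)
    show "x \<in> prod_carrier n (\<alpha>(i := \<beta>))"
      using top(1) i unfolding x_def prod_carrier_def omega_exp_carrier_def by auto
    show "\<forall>f\<in>omega_exp_carrier (\<alpha> i). \<not> omega_exp_le ((\<alpha>(i := \<beta>)) i) (x i) (e i f)"
      using top(2) unfolding x_def e_def by simp
    show "\<forall>f\<in>omega_exp_carrier (\<alpha> j). \<not> omega_exp_le ((\<alpha>(i := \<beta>)) j) (e j f) (x j)"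
      using j(2) unfolding x_def e_def by (simp add: not_omega_exp_le_bump_zero)
  qed
qed

theorem mainTheorem10:
  fixes n :: nat and \<alpha> :: "nat \<Rightarrow> 'a rel" and i :: nat and \<beta> :: "'a rel"
  assumes "n \<ge> 2"
    and "\<forall>j<n. Well_order (\<alpha> j) \<and> Field (\<alpha> j) \<noteq> {}"
    and "i < n"
    and "(\<alpha> i, \<beta>) \<in> ordLess"
  shows "width_less (prod_carrier n \<alpha>) (prod_le n \<alpha>)
                    (prod_carrier n (\<alpha>(i := \<beta>))) (prod_le n (\<alpha>(i := \<beta>)))"
proof -
  define j where "j = (if i = 0 then 1 else 0 :: nat)"
  have j: "j < n" "j \<noteq> i" using assms(1,3) unfolding j_def by auto
  then obtain m where m: "m \<in> Field (\<alpha> j)" using assms(2) by blast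
  have wo: "\<forall>c<n. Well_order (\<alpha> c)" using assms(2) by blast
  show ?thesis by (rule width_less_prod_fun_upd[OF wo assms(3) j m assms(4)])
qed

end
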